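(* Let $q=2^m$ with $m\ge 4$ even. Then the subfield subcode $\mathcal C_{\{3,5\}}^{\perp}|_{\mathrm{GF}(q)}$ has parameters $[q+1,q-3,4]_q$.
   Context: Let $U_{q+1}$ be the set of $(q+1)$-th roots of unity in $\mathrm{GF}(q^2)$; coordinates of vectors of length $q+1$ are indexed by $U_{q+1}$ (in a fixed order). Define the code over $\mathrm{GF}(q^2)$ $\mathcal C_{\{3,5\}}=\{(a_3u^3+a_{q-2}u^{q-2}+a_5u^5+a_{q-4}u^{q-4})_{u\in U_{q+1}}: a_3,a_{q-2},a_5,a_{q-4}\in\mathrm{GF}(q^2)\}$. $\mathcal C_{\{3,5\}}^\perp$ is its dual with respect to the standard inner product $\sum_u c_uw_u$, and $\mathcal C^\perp_{\{3,5\}}|_{\mathrm{GF}(q)}=\mathcal C^\perp_{\{3,5\}}\cap\mathrm{GF}(q)^{q+1}$. $[n,k,d]_q$ denotes a linear code over $\mathrm{GF}(q)$ of length $n$, dimension $k$, minimum distance $d$. *)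

theory Defs
  imports Main
begin

text \<open>The ambient field 'a plays the role of GF(q^2); vectors of length q+1 are
functions 'a => 'a indexed by the (q+1)-th roots of unity, and zero outside.\<close>

definition roots_unity :: "nat \<Rightarrow> 'a::field set" where
  "roots_unity q = {u. u ^ (q + 1) = 1}"

definition subfield_q :: "nat \<Rightarrow> 'a::field set" where
  "subfield_q q = {x. x ^ q = x}"

definition vectors_on :: "'i set \<Rightarrow> ('i \<Rightarrow> 'a::zero) set" where
  "vectors_on I = {c. \<forall>i. i \<notin> I \<longrightarrow> c i = 0}"

definition code_C35 :: "nat \<Rightarrow> ('a::field \<Rightarrow> 'a) set" where
  "code_C35 q = {c. \<exists>a3 aq2 a5 aq4.
      c = (\<lambda>u. if u \<in> roots_unity q
                then a3 * u ^ 3 + aq2 * u ^ (q - 2) + a5 * u ^ 5 + aq4 * u ^ (q - 4)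
                else 0)}"

definition dual_code :: "'i set \<Rightarrow> ('i \<Rightarrow> 'a::field) set \<Rightarrow> ('i \<Rightarrow> 'a) set" where
  "dual_code I C = {w \<in> vectors_on I. \<forall>c\<in>C. (\<Sum>u\<in>I. c u * w u) = 0}"

definition subfield_subcode :: "'i set \<Rightarrow> 'a set \<Rightarrow> ('i \<Rightarrow> 'a::field) set \<Rightarrow> ('i \<Rightarrow> 'a) set" where
  "subfield_subcode I F C = {w \<in> C. \<forall>u\<in>I. w u \<in> F}"

definition hamming_dist :: "'i set \<Rightarrow> ('i \<Rightarrow> 'a) \<Rightarrow> ('i \<Rightarrow> 'a) \<Rightarrow> nat" where
  "hamming_dist I x y = card {i \<in> I. x i \<noteq> y i}"

definition min_distance :: "'i set \<Rightarrow> ('i \<Rightarrow> 'a) set \<Rightarrow> nat" where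
  "min_distance I C = Min {hamming_dist I x y | x y. x \<in> C \<and> y \<in> C \<and> x \<noteq> y}"

definition linear_code_params ::
  "'i set \<Rightarrow> 'a::field set \<Rightarrow> ('i \<Rightarrow> 'a) set \<Rightarrow> nat \<Rightarrow> nat \<Rightarrow> nat \<Rightarrow> bool" where
  "linear_code_params I F C n k d \<longleftrightarrow>
     finite I \<and> C \<subseteq> vectors_on I \<and> (\<forall>c\<in>C. \<forall>i\<in>I. c i \<in> F) \<and>
     (\<lambda>_. 0) \<in> C \<and> (\<forall>x\<in>C. \<forall>y\<in>C. (\<lambda>i. x i + y i) \<in> C) \<and>
     (\<forall>a\<in>F. \<forall>x\<in>C. (\<lambda>i. a * x i) \<in> C) \<and>
     n = card I \<and> card C = card F ^ k \<and> d = min_distance I C"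

end

(*
  Write S_k(w) for the sum of w(u) * u^k over u in U.  For a GF(q)-valued word w the
  Frobenius x -> x^q maps S_k(w) to S_(q+1-k)(w), because u^q = 1/u on U.  Hence the
  subfield subcode is the kernel of the GF(q)-linear map w -> (S_3(w), S_5(w)) from GF(q)^U
  onto GF(q^2)^2, and it has q^(q+1-4) elements.

  No nonzero codeword has weight at most 3: with v_t = w(t) * t^(-5) and s_t = t^2, the
  conditions S_(-5) = S_(-3) = S_3 = S_5 = 0 say that the moments of order 0, 1, 4 and 5 of
  v at the points s_t vanish, which in characteristic 2 is impossible on three distinct points.

  A codeword of weight 4 lives on {a, 1/a, b, 1/b}, with the value y^3 + y on {a, 1/a} and
  z^3 + z on {b, 1/b}, where z = a + 1/a and y = b + 1/b.  Then S_3 vanishes by symmetry, and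
  S_5 vanishes as soon as yz + y + z = 0.  Suitable a and b exist by counting: the values
  a + 1/a for a in U - {1} fill more than half of GF(q) - {0, 1} (for m even, 3 does not
  divide q + 1, so the value 1 is not taken), and z -> z/(z + 1) permutes GF(q) - {0, 1}.
*)

theory Submission
  imports
    Defs
    "HOL-Computational_Algebra.Polynomial"
    "HOL-Computational_Algebra.Primes"
    "HOL-Library.FuncSet"
    "HOL-Library.Function_Algebras"
    "HOL-Library.Product_Plus"
begin

section \<open>Finite fields and roots of unity\<close>

lemma finite_field_power_card_minus_one:
  fixes x :: "'a::{field,finite}"
  assumes "x \<noteq> 0"
  shows "x ^ (card (UNIV :: 'a set) - 1) = 1"
proof -
  have "(\<Prod>y\<in>UNIV - {0}. x * y) = (\<Prod>y\<in>UNIV - {0}. y)"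
    by (rule prod.reindex_bij_witness[of _ "\<lambda>y. y / x" "\<lambda>y. x * y"]) (use assms in auto)
  then show ?thesis
    by (simp add: prod.distrib card_Diff_singleton)
qed

lemma finite_field_power_card_UNIV:
  fixes x :: "'a::{field,finite}"
  shows "x ^ card (UNIV :: 'a set) = x"
proof (cases "x = 0")
  case False
  have "x ^ card (UNIV :: 'a set) = x * x ^ (card (UNIV :: 'a set) - 1)"
    using finite_UNIV_card_ge_0[where 'a='a] by (cases "card (UNIV :: 'a set)") simp_all
  then show ?thesis
    using finite_field_power_card_minus_one[OF False] by simp
qed (simp add: finite_UNIV_card_ge_0)

lemma
  fixes c :: "'a::idom"
  assumes "n > 0"
  shows finite_power_eq: "finite {x. x ^ n = c}"
    and card_power_eq_le: "card {x. x ^ n = c} \<le> n"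
proof -
  define p where "p = monom 1 n - [:c:]"
  have "coeff p n = 1"
    using assms by (simp add: p_def coeff_pCons split: nat.splits)
  then have "p \<noteq> 0"
    by auto
  moreover have "degree p \<le> n"
    unfolding p_def by (metis degree_diff_le degree_monom_le degree_pCons_0 le0)
  moreover have "{x. x ^ n = c} = {x. poly p x = 0}"
    by (simp add: p_def poly_monom)
  ultimately show "finite {x. x ^ n = c}" "card {x. x ^ n = c} \<le> n"
    using poly_roots_finite[of p] card_poly_roots_bound[of p] by simp_all
qed

lemma card_roots_unity_finite_field:
  assumes "a * b = card (UNIV :: 'a::{field,finite} set) - 1"
  shows "card {x::'a. x ^ a = 1} = a"
proof -
  let ?R = "{x::'a. x ^ a = 1}"
  have "card {0, 1::'a} \<le> card (UNIV :: 'a set)"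
    by (rule card_mono) simp_all
  then have "card (UNIV :: 'a set) \<ge> 2"
    by simp
  then have pos: "a > 0" "b > 0"
    using assms by (auto intro: Nat.gr0I)
  have "(x ^ b) ^ a = 1" if "x \<noteq> 0" for x :: 'a
    using finite_field_power_card_minus_one[OF that] assms by (simp flip: power_mult add: mult.commute)
  then have "UNIV - {0} \<subseteq> (\<Union>y\<in>?R. {x. x ^ b = y})"
    by blast
  then have "card (UNIV - {0::'a}) \<le> card (\<Union>y\<in>?R. {x::'a. x ^ b = y})"
    by (intro card_mono) auto
  also have "\<dots> \<le> (\<Sum>y\<in>?R. card {x::'a. x ^ b = y})"
    by (rule card_UN_le) simp
  also have "\<dots> \<le> (\<Sum>y\<in>?R. b)"
    by (intro sum_mono card_power_eq_le pos)
  finally have "a * b \<le> card ?R * b"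
    using assms by (simp add: card_Diff_singleton)
  then have "a \<le> card ?R"
    using pos by simp
  moreover have "card ?R \<le> a"
    using card_power_eq_le pos by blast
  ultimately show ?thesis
    by simp
qed

lemma power_mod_roots_unity:
  fixes u :: "'a::monoid_mult"
  assumes "u ^ n = 1"
  shows "u ^ k = u ^ (k mod n)"
proof -
  have "u ^ k = (u ^ n) ^ (k div n) * u ^ (k mod n)"
    by (simp flip: power_mult power_add)
  with assms show ?thesis
    by simp
qed

lemma exists_root_unity_power_ne_1:
  assumes "card {u::'a::idom. u ^ n = 1} = n" and "n > 0" and "\<not> n dvd k"
  shows "\<exists>g::'a. g ^ n = 1 \<and> g ^ k \<noteq> 1"
proof (rule ccontr)
  assume no_witness: "\<nexists>g::'a. g ^ n = 1 \<and> g ^ k \<noteq> 1"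
  have "{u::'a. u ^ n = 1} \<subseteq> {u. u ^ (k mod n) = 1}"
  proof
    fix u :: 'a
    assume "u \<in> {u. u ^ n = 1}"
    then have "u ^ n = 1"
      by simp
    with no_witness have "u ^ k = 1"
      by blast
    with power_mod_roots_unity[OF \<open>u ^ n = 1\<close>, of k] show "u \<in> {u. u ^ (k mod n) = 1}"
      by simp
  qed
  moreover have "0 < k mod n"
    using assms(3) by (simp add: dvd_eq_mod_eq_0 gr0I)
  ultimately have "card {u::'a. u ^ n = 1} \<le> card {u::'a. u ^ (k mod n) = 1}"
    by (intro card_mono finite_power_eq)
  also have "\<dots> \<le> k mod n"
    by (rule card_power_eq_le) fact
  finally show False
    using assms(1) mod_less_divisor[OF assms(2), of k] by linarith
qed

lemma sum_power_roots_unity: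
  assumes "card {u::'a::field. u ^ n = 1} = n" and "n > 0"
  shows "(\<Sum>u | u ^ n = 1. (u::'a) ^ k) = (if n dvd k then of_nat n else 0)"
proof (cases "n dvd k")
  case True
  have one: "u ^ k = 1" if "u ^ n = 1" for u :: 'a
    using power_mod_roots_unity[OF that, of k] True by (simp add: dvd_eq_mod_eq_0)
  have "(\<Sum>u | u ^ n = 1. (u::'a) ^ k) = (\<Sum>u::'a | u ^ n = 1. 1)"
    by (rule sum.cong[OF refl]) (simp add: one)
  then show ?thesis
    using True assms(1) by simp
next
  case False
  let ?R = "{u::'a. u ^ n = 1}"
  obtain g :: 'a where g: "g ^ n = 1" "g ^ k \<noteq> 1"
    using exists_root_unity_power_ne_1[OF assms False] by blast
  then have "g \<noteq> 0"
    using assms(2) by (auto simp: power_0_left)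
  then have "(\<Sum>u\<in>?R. u ^ k) = (\<Sum>u\<in>?R. (g * u) ^ k)"
    by (intro sum.reindex_bij_witness[of _ "\<lambda>u. g * u" "\<lambda>u. u / g"])
      (use g(1) in \<open>auto simp: power_mult_distrib power_divide\<close>)
  also have "\<dots> = g ^ k * (\<Sum>u\<in>?R. u ^ k)"
    by (simp only: power_mult_distrib sum_distrib_left)
  finally have "(1 - g ^ k) * (\<Sum>u\<in>?R. u ^ k) = 0"
    by (simp add: algebra_simps)
  then show ?thesis
    using g(2) False by simp
qed

lemma finite_field_even_card_CHAR:
  assumes "even (card (UNIV :: 'a::{field,finite} set))"
  shows "CHAR('a) = 2"
proof (rule CHAR_eq_posI)
  have "odd (card (UNIV :: 'a set) - 1)"
    using assms finite_UNIV_card_ge_0[where 'a='a] by simp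
  then have "(-1::'a) = 1"
    using finite_field_power_card_minus_one[of "-1::'a"] by simp
  then show "of_nat 2 = (0::'a)"
    by (metis add.inverse_inverse neg_eq_iff_add_eq_0 of_nat_numeral one_add_one)
next
  show "of_nat x \<noteq> (0::'a)" if "x > 0" "x < 2" for x
    using that by (simp add: less_2_cases_iff)
qed simp

section \<open>Identities in characteristic 2\<close>

lemma CHAR2_two_eq_zero:
  assumes "CHAR('a::semiring_1) = 2"
  shows "(2::'a) = 0"
  using of_nat_CHAR[where 'a='a] assms by simp

lemma CHAR2_add_self:
  fixes x :: "'a::ring_1"
  assumes "CHAR('a) = 2"
  shows "x + x = 0"
  by (metis assms uminus_CHAR_2 add.right_inverse)

lemma CHAR2_add_eq_0_iff:
  fixes x y :: "'a::ring_1"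
  assumes "CHAR('a) = 2"
  shows "x + y = 0 \<longleftrightarrow> x = y"
  by (metis assms minus_CHAR_2 right_minus_eq)

lemma CHAR2_power_two_pow_add:
  fixes x y :: "'a::comm_ring_1"
  assumes "CHAR('a) = 2"
  shows "(x + y) ^ (2 ^ k) = x ^ (2 ^ k) + y ^ (2 ^ k)"
  by (rule freshmans_dream') (simp_all add: assms)

lemma CHAR2_power2_add:
  fixes x y :: "'a::comm_ring_1"
  assumes "CHAR('a) = 2"
  shows "(x + y) ^ 2 = x ^ 2 + y ^ 2"
  using CHAR2_power_two_pow_add[OF assms, of x y 1] by simp

lemma CHAR2_power2_eq_iff:
  fixes x y :: "'a::idom"
  assumes "CHAR('a) = 2"
  shows "x ^ 2 = y ^ 2 \<longleftrightarrow> x = y"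
  by (metis assms CHAR2_add_eq_0_iff CHAR2_power2_add power_zero_numeral zero_eq_power2)

lemma CHAR2_two_points_moments_1_5:
  fixes x y v w :: "'a::idom"
  assumes "CHAR('a) = 2" and "x \<noteq> 0" "y \<noteq> 0" "x \<noteq> y"
    and "v * x + w * y = 0" and "v * x ^ 5 + w * y ^ 5 = 0"
  shows "v = 0 \<and> w = 0"
proof -
  have wy: "w * y = v * x"
    using assms(5) CHAR2_add_eq_0_iff[OF assms(1)] by simp
  have "v * x * y * (x + y) ^ 4 = v * x * y * (x ^ 4 + y ^ 4)"
    using CHAR2_power_two_pow_add[OF assms(1), of x y 2] by simp
  also have "\<dots> = y * (v * x ^ 5) + (w * y) * y ^ 4 * y"
    by (simp add: wy algebra_simps eval_nat_numeral)
  also have "\<dots> = y * (v * x ^ 5 + w * y ^ 5)"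
    by (simp add: algebra_simps eval_nat_numeral)
  finally have "v * x * y * (x + y) ^ 4 = 0"
    using assms(6) by simp
  moreover have "x + y \<noteq> 0"
    using assms(4) CHAR2_add_eq_0_iff[OF assms(1)] by simp
  ultimately have "v = 0"
    using assms(2,3) by simp
  then show ?thesis
    using wy assms(3) by simp
qed

lemma CHAR2_three_points_moments_0_1_4_5:
  fixes s t r v w z :: "'a::idom"
  assumes char: "CHAR('a) = 2" and "s \<noteq> t" "t \<noteq> r" "s \<noteq> r"
    and m0: "v + w + z = 0"
    and m1: "v * s + w * t + z * r = 0"
    and m4: "v * s ^ 4 + w * t ^ 4 + z * r ^ 4 = 0"
    and m5: "v * s ^ 5 + w * t ^ 5 + z * r ^ 5 = 0"
  shows "v = 0 \<and> w = 0 \<and> z = 0"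
proof -
  \<comment> \<open>Translating all points by r keeps the moments 1 and 5 zero and removes the third point.\<close>
  have rr: "r + r = 0"
    using CHAR2_add_self[OF char] .
  have shift5: "(a + r) ^ 5 = a ^ 5 + r * a ^ 4 + r ^ 4 * a + r ^ 5" for a
  proof -
    have "(a + r) ^ 5 = (a + r) ^ 4 * (a + r)"
      by (simp add: eval_nat_numeral)
    also have "\<dots> = (a ^ 4 + r ^ 4) * (a + r)"
      using CHAR2_power_two_pow_add[OF char, of a r 2] by simp
    finally show ?thesis
      by (simp add: algebra_simps eval_nat_numeral)
  qed
  have "v * (s + r) + w * (t + r) = v * (s + r) + w * (t + r) + z * (r + r)"
    by (simp add: rr)
  also have "\<dots> = (v * s + w * t + z * r) + r * (v + w + z)"
    by (simp add: algebra_simps)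
  finally have shifted1: "v * (s + r) + w * (t + r) = 0"
    using m0 m1 by simp
  have "v * (s + r) ^ 5 + w * (t + r) ^ 5 = v * (s + r) ^ 5 + w * (t + r) ^ 5 + z * (r + r) ^ 5"
    by (simp add: rr)
  also have "\<dots> = (v * s ^ 5 + w * t ^ 5 + z * r ^ 5) + r * (v * s ^ 4 + w * t ^ 4 + z * r ^ 4)
      + r ^ 4 * (v * s + w * t + z * r) + r ^ 5 * (v + w + z)"
    by (simp only: shift5) (simp add: algebra_simps)
  finally have shifted5: "v * (s + r) ^ 5 + w * (t + r) ^ 5 = 0"
    using m0 m1 m4 m5 by simp
  have "s + r \<noteq> 0" "t + r \<noteq> 0" "s + r \<noteq> t + r"
    using assms(2-4) CHAR2_add_eq_0_iff[OF char] by auto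
  then have "v = 0 \<and> w = 0"
    using CHAR2_two_points_moments_1_5[OF char _ _ _ shifted1 shifted5] by simp
  then show ?thesis
    using m0 by simp
qed

lemma CHAR2_power3_add_reciprocal:
  fixes a b :: "'a::comm_ring_1"
  assumes char: "CHAR('a) = 2" and "a * b = 1"
  shows "a ^ 3 + b ^ 3 = (a + b) ^ 3 + (a + b)"
proof -
  have "(a + b) ^ 3 = (a ^ 2 + b ^ 2) * (a + b)"
    by (simp add: CHAR2_power2_add[OF char] power2_eq_square power3_eq_cube algebra_simps
        CHAR2_two_eq_zero[OF char])
  also have "\<dots> = a ^ 3 + b ^ 3 + (a * b) * (a + b)"
    by (simp add: algebra_simps power2_eq_square power3_eq_cube)
  finally have "(a + b) ^ 3 + (a + b) = a ^ 3 + b ^ 3 + ((a + b) + (a + b))"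
    using assms(2) by (simp add: algebra_simps)
  then show ?thesis
    by (simp add: CHAR2_add_self[OF char])
qed

lemma CHAR2_power5_add_reciprocal:
  fixes a b :: "'a::comm_ring_1"
  assumes char: "CHAR('a) = 2" and "a * b = 1"
  shows "a ^ 5 + b ^ 5 = (a + b) ^ 5 + (a + b) ^ 3 + (a + b)"
proof -
  have "(a + b) ^ 5 = (a ^ 4 + b ^ 4) * (a + b)"
    using CHAR2_power_two_pow_add[OF char, of a b 2] by (simp add: eval_nat_numeral)
  also have "\<dots> = a ^ 5 + b ^ 5 + (a * b) * (a ^ 3 + b ^ 3)"
    by (simp add: algebra_simps eval_nat_numeral)
  finally have "(a + b) ^ 5 + (a + b) ^ 3 + (a + b)
      = a ^ 5 + b ^ 5 + ((a ^ 3 + b ^ 3) + ((a + b) ^ 3 + (a + b)))"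
    using assms(2) by (simp add: algebra_simps)
  then show ?thesis
    by (simp add: CHAR2_power3_add_reciprocal[OF assms] CHAR2_add_self[OF char])
qed

lemma CHAR2_power3_add_self:
  fixes x :: "'a::comm_ring_1"
  assumes char: "CHAR('a) = 2"
  shows "x ^ 3 + x = x * (x + 1) ^ 2"
  by (simp add: CHAR2_power2_add[OF char] algebra_simps power2_eq_square power3_eq_cube
      CHAR2_two_eq_zero[OF char])

lemma CHAR2_cubic_quintic_identity:
  fixes y z :: "'a::comm_ring_1"
  assumes char: "CHAR('a) = 2"
  shows "(y ^ 3 + y) * (z ^ 5 + z ^ 3 + z) + (z ^ 3 + z) * (y ^ 5 + y ^ 3 + y)
    = y * z * ((y + z) * (y * z + y + z)) ^ 2"
proof -
  note sq = CHAR2_power2_add[OF char]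
  note P3 = CHAR2_power3_add_self[OF char]
  have P5: "t ^ 5 + t ^ 3 + t = t * (t ^ 2 + t + 1) ^ 2" for t :: 'a
    by (simp add: sq algebra_simps eval_nat_numeral CHAR2_two_eq_zero[OF char])
  have key: "(y + 1) * (z ^ 2 + z + 1) + (z + 1) * (y ^ 2 + y + 1) = (y + z) * (y * z + y + z)"
    by (simp add: algebra_simps power2_eq_square CHAR2_two_eq_zero[OF char])
  have "(y ^ 3 + y) * (z ^ 5 + z ^ 3 + z) + (z ^ 3 + z) * (y ^ 5 + y ^ 3 + y)
      = y * z * (((y + 1) * (z ^ 2 + z + 1)) ^ 2 + ((z + 1) * (y ^ 2 + y + 1)) ^ 2)"
    by (simp only: P3 P5 power_mult_distrib) (simp add: algebra_simps)
  also have "\<dots> = y * z * ((y + 1) * (z ^ 2 + z + 1) + (z + 1) * (y ^ 2 + y + 1)) ^ 2"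
    by (simp add: sq)
  finally show ?thesis
    by (simp add: key)
qed

section \<open>Counting and Hamming weights\<close>

lemma add_inverse_eq_iff:
  fixes a b :: "'a::field"
  assumes "a \<noteq> 0" "b \<noteq> 0"
  shows "a + inverse a = b + inverse b \<longleftrightarrow> b = a \<or> b = inverse a"
proof -
  have "a + inverse a - (b + inverse b) = (a - b) * (a * b - 1) / (a * b)"
    using assms by (simp add: field_simps)
  then have "a + inverse a = b + inverse b \<longleftrightarrow> a = b \<or> a * b = 1"
    using assms by auto
  then show ?thesis
    using assms by (auto simp: field_simps)
qed

lemma card_eq_card_image_mult_card_kernel:
  fixes f :: "'a::ab_group_add \<Rightarrow> 'b::ab_group_add"
  assumes "finite A"
    and diff_closed: "\<And>x y. x \<in> A \<Longrightarrow> y \<in> A \<Longrightarrow> x - y \<in> A"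
    and additive: "\<And>x y. x \<in> A \<Longrightarrow> y \<in> A \<Longrightarrow> f (x - y) = f x - f y"
  shows "card A = card (f ` A) * card {x \<in> A. f x = 0}"
proof -
  let ?K = "{x \<in> A. f x = 0}"
  have fibre: "card {x \<in> A. f x = f x0} = card ?K" if x0: "x0 \<in> A" for x0
  proof -
    have neg: "- x0 \<in> A" "f (- x0) = - f x0"
      using diff_closed[OF diff_closed[OF x0 x0] x0] additive[OF diff_closed[OF x0 x0] x0]
        additive[OF x0 x0] by simp_all
    have "bij_betw (\<lambda>x. x - x0) {x \<in> A. f x = f x0} ?K"
    proof (rule bij_betwI[where g = "\<lambda>z. z + x0"])
      show "(\<lambda>x. x - x0) \<in> {x \<in> A. f x = f x0} \<rightarrow> ?K"
        using diff_closed additive x0 by auto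
      show "(\<lambda>z. z + x0) \<in> ?K \<rightarrow> {x \<in> A. f x = f x0}"
        using diff_closed[of _ "- x0"] additive[of _ "- x0"] neg by auto
    qed simp_all
    then show ?thesis
      by (rule bij_betw_same_card)
  qed
  have "A = (\<Union>y\<in>f ` A. {x \<in> A. f x = y})"
    by auto
  then have "card A = card (\<Union>y\<in>f ` A. {x \<in> A. f x = y})"
    by simp
  also have "\<dots> = (\<Sum>y\<in>f ` A. card {x \<in> A. f x = y})"
    by (rule card_UN_disjoint) (use assms(1) in auto)
  also have "\<dots> = (\<Sum>y\<in>f ` A. card ?K)"
    using fibre by (intro sum.cong) auto
  finally show ?thesis
    by simp
qed

lemma pigeonhole_inter_image:
  assumes "finite S" "I \<subseteq> S" "f ` I \<subseteq> S" "inj_on f I" "card S < 2 * card I"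
  shows "I \<inter> f ` I \<noteq> {}"
proof
  assume "I \<inter> f ` I = {}"
  moreover have "finite I"
    using assms(1,2) finite_subset by blast
  ultimately have "card (I \<union> f ` I) = card I + card (f ` I)"
    by (simp add: card_Un_disjoint)
  then have "card (I \<union> f ` I) = 2 * card I"
    using card_image[OF assms(4)] by simp
  moreover have "card (I \<union> f ` I) \<le> card S"
    using assms(1-3) by (intro card_mono) auto
  ultimately show False
    using assms(5) by simp
qed

definition hamming_weight :: "'i set \<Rightarrow> ('i \<Rightarrow> 'a::zero) \<Rightarrow> nat" where
  "hamming_weight I w = card {i \<in> I. w i \<noteq> 0}"

lemma hamming_dist_eq_weight_diff:
  fixes x y :: "'i \<Rightarrow> 'a::group_add"
  shows "hamming_dist I x y = hamming_weight I (x - y)"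
  by (simp add: hamming_dist_def hamming_weight_def)

lemma min_distance_eq_min_weight:
  fixes C :: "('i \<Rightarrow> 'a::group_add) set"
  assumes "finite I" and "0 \<in> C" and diff_closed: "\<And>x y. x \<in> C \<Longrightarrow> y \<in> C \<Longrightarrow> x - y \<in> C"
    and weight_ge: "\<And>v. v \<in> C \<Longrightarrow> v \<noteq> 0 \<Longrightarrow> d \<le> hamming_weight I v"
    and "w \<in> C" "hamming_weight I w = d" "d > 0"
  shows "min_distance I C = d"
  unfolding min_distance_def
proof (rule Min_eqI)
  show "finite {hamming_dist I x y | x y. x \<in> C \<and> y \<in> C \<and> x \<noteq> y}"
    by (rule finite_subset[of _ "{..card I}"])
      (auto simp: hamming_dist_def assms(1) intro!: card_mono)
  show "d \<le> e" if "e \<in> {hamming_dist I x y | x y. x \<in> C \<and> y \<in> C \<and> x \<noteq> y}" for e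
    using that weight_ge diff_closed by (auto simp: hamming_dist_eq_weight_diff)
  have "w \<noteq> 0"
    using assms(6,7) by (auto simp: hamming_weight_def)
  then show "d \<in> {hamming_dist I x y | x y. x \<in> C \<and> y \<in> C \<and> x \<noteq> y}"
    using assms(2,5,6) by (force simp: hamming_dist_eq_weight_diff)
qed

section \<open>The field with q^2 elements, q = 2^m\<close>

locale gf_q_squared =
  fixes m q :: nat and U :: "'a::{field,finite} set"
  assumes q_def: "q = 2 ^ m"
    and card_UNIV: "card (UNIV :: 'a set) = q ^ 2"
    and U_def: "U = roots_unity q"
begin

abbreviation F :: "'a set" where
  "F \<equiv> subfield_q q"

lemma q_ge_2: "q \<ge> 2"
proof -
  have "card {0, 1::'a} \<le> q ^ 2"
    unfolding card_UNIV[symmetric] by (rule card_mono) simp_all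
  then have "2 \<le> q ^ 2"
    by simp
  show ?thesis
  proof (rule ccontr)
    assume "\<not> q \<ge> 2"
    then have "q = 0 \<or> q = 1"
      by auto
    with \<open>2 \<le> q ^ 2\<close> show False
      by auto
  qed
qed

lemma even_q: "even q"
  using q_ge_2 q_def by (cases m) simp_all

lemma CHAR_eq_2: "CHAR('a) = 2"
  using even_q by (intro finite_field_even_card_CHAR) (simp add: card_UNIV)

lemma of_nat_q: "(of_nat q :: 'a) = 0"
  using even_q by (simp add: of_nat_eq_0_iff_char_dvd CHAR_eq_2)

lemma frobenius_add: "(x + y) ^ q = x ^ q + (y :: 'a) ^ q"
  by (rule freshmans_dream') (simp_all add: CHAR_eq_2 q_def)

lemma frobenius_sum: "(\<Sum>i\<in>A. f i :: 'a) ^ q = (\<Sum>i\<in>A. f i ^ q)"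
  by (rule freshmans_dream_sum') (simp_all add: CHAR_eq_2 q_def)

lemma power_q_q: "(x :: 'a) ^ (q * q) = x"
  using finite_field_power_card_UNIV[of x] by (simp add: card_UNIV power2_eq_square)

lemma mem_F_iff: "x \<in> F \<longleftrightarrow> x ^ q = x"
  by (simp add: subfield_q_def)

lemma zero_mem_F: "0 \<in> F" and one_mem_F: "1 \<in> F"
  using q_ge_2 by (simp_all add: mem_F_iff)

lemma add_mem_F: "x \<in> F \<Longrightarrow> y \<in> F \<Longrightarrow> x + y \<in> F"
  by (simp add: mem_F_iff frobenius_add)

lemma mult_mem_F: "x \<in> F \<Longrightarrow> y \<in> F \<Longrightarrow> x * y \<in> F"
  by (simp add: mem_F_iff power_mult_distrib)

lemma divide_mem_F: "x \<in> F \<Longrightarrow> y \<in> F \<Longrightarrow> x / y \<in> F"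
  by (simp add: mem_F_iff power_divide)

lemma power_mem_F: "x \<in> F \<Longrightarrow> x ^ n \<in> F"
proof -
  have "(x ^ n) ^ q = (x ^ q) ^ n"
    by (simp only: power_mult[symmetric] mult.commute)
  then show "x \<in> F \<Longrightarrow> x ^ n \<in> F"
    by (simp add: mem_F_iff)
qed

definition trace :: "'a \<Rightarrow> 'a" where
  "trace x = x + x ^ q"

lemma trace_mem_F: "trace x \<in> F"
  by (simp add: mem_F_iff trace_def frobenius_add power_q_q add.commute flip: power_mult)

lemma card_F: "card F = q"
proof -
  have "x \<in> F \<longleftrightarrow> x = 0 \<or> x ^ (q - 1) = 1" for x :: 'a
  proof -
    have "x ^ q = x * x ^ (q - 1)"
      using q_ge_2 by (cases q) simp_all
    then show ?thesis
      by (auto simp: mem_F_iff)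
  qed
  then have "F = insert 0 {x. x ^ (q - 1) = 1}"
    by blast
  moreover have "(q - 1) * (q + 1) = card (UNIV :: 'a set) - 1"
    using q_ge_2 by (simp add: card_UNIV power2_eq_square algebra_simps)
  then have "card {x::'a. x ^ (q - 1) = 1} = q - 1"
    by (rule card_roots_unity_finite_field)
  moreover have "(0::'a) \<notin> {x. x ^ (q - 1) = 1}"
    using q_ge_2 by (simp add: power_0_left)
  ultimately show ?thesis
    using q_ge_2 by simp
qed

lemma mem_U_iff: "u \<in> U \<longleftrightarrow> u ^ (q + 1) = 1"
  by (simp add: U_def roots_unity_def)

lemma card_U: "card U = q + 1"
proof -
  have "(q + 1) * (q - 1) = card (UNIV :: 'a set) - 1"
    using q_ge_2 by (simp add: card_UNIV power2_eq_square algebra_simps)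
  then show ?thesis
    unfolding U_def roots_unity_def by (rule card_roots_unity_finite_field)
qed

lemma one_mem_U: "1 \<in> U"
  by (simp add: mem_U_iff)

lemma U_nonzero: "u \<in> U \<Longrightarrow> u \<noteq> 0"
  by (auto simp: mem_U_iff)

lemma inverse_mem_U: "u \<in> U \<Longrightarrow> inverse u \<in> U"
  unfolding mem_U_iff by (simp only: power_inverse) simp

lemma U_power_q: "u \<in> U \<Longrightarrow> u ^ q = inverse u"
  using U_nonzero[of u] by (simp add: mem_U_iff field_simps)

lemma sum_power_U: "(\<Sum>u\<in>U. u ^ k) = (if (q + 1) dvd k then 1 else 0)"
proof -
  have "(\<Sum>u\<in>U. u ^ k) = (if (q + 1) dvd k then of_nat (q + 1) else 0)"
    unfolding U_def roots_unity_def
    by (rule sum_power_roots_unity) (use card_U in \<open>simp_all add: U_def roots_unity_def\<close>)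
  then show ?thesis
    using of_nat_q by simp
qed

lemma trace_U: "u \<in> U \<Longrightarrow> trace u = u + inverse u"
  by (simp add: trace_def U_power_q)

lemma U_power_add_q1: "u \<in> U \<Longrightarrow> u ^ (k + (q + 1)) = u ^ k"
  by (simp only: power_add mem_U_iff) simp

lemma U_power_conj:
  assumes "u \<in> U" "k \<le> q + 1"
  shows "(u ^ k) ^ q = u ^ (q + 1 - k)"
proof -
  have "(u ^ k) ^ q = (u ^ q) ^ k"
    by (simp only: power_mult[symmetric] mult.commute)
  also have "\<dots> = inverse (u ^ k)"
    using assms(1) by (simp add: U_power_q power_inverse)
  also have "\<dots> = u ^ (q + 1) / u ^ k"
    using assms(1) by (simp add: mem_U_iff divide_inverse)
  also have "\<dots> = u ^ (q + 1 - k)"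
    using assms U_nonzero by (simp add: power_diff)
  finally show ?thesis .
qed

lemma trace_U_eq_iff:
  "a \<in> U \<Longrightarrow> b \<in> U \<Longrightarrow> trace a = trace b \<longleftrightarrow> b = a \<or> b = inverse a"
  by (simp add: trace_U U_nonzero add_inverse_eq_iff)

lemma trace_U_eq_0_iff:
  assumes "a \<in> U"
  shows "trace a = 0 \<longleftrightarrow> a = 1"
proof -
  have "trace 1 = 0"
    using CHAR2_add_self[OF CHAR_eq_2, of 1] by (simp add: trace_U one_mem_U)
  then show ?thesis
    using trace_U_eq_iff[OF one_mem_U assms] by auto
qed

lemma q_mod_3:
  assumes "even m"
  shows "q mod 3 = 1"
proof -
  obtain b where "m = 2 * b"
    using assms by (elim evenE)
  then have "q = 4 ^ b"
    by (simp add: q_def power_mult)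
  then have "q mod 3 = (4 mod 3) ^ b mod 3"
    by (simp only: power_mod)
  then show ?thesis
    by simp
qed

\<comment> \<open>A trace 1 would make a a primitive cube root of unity, but (q + 1) mod 3 = 2.\<close>
lemma trace_U_ne_1:
  assumes "even m" "a \<in> U"
  shows "trace a \<noteq> 1"
proof
  assume trace_1: "trace a = 1"
  then have "a * a + 1 = a"
    using assms(2) U_nonzero by (simp add: trace_U field_simps)
  then have "a ^ 2 + a + 1 = a + a"
    by (simp add: power2_eq_square algebra_simps)
  then have root: "a ^ 2 + a + 1 = 0"
    by (simp add: CHAR2_add_self[OF CHAR_eq_2])
  have "a ^ 3 - 1 = (a - 1) * (a ^ 2 + a + 1)"
    by (simp add: algebra_simps power2_eq_square power3_eq_cube)
  then have "a ^ 3 = 1"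
    using root by simp
  have "q = 3 * (q div 3) + q mod 3"
    by simp
  then have "q + 1 = 3 * (q div 3) + 2"
    using q_mod_3[OF assms(1)] by simp
  then have "a ^ (q + 1) = (a ^ 3) ^ (q div 3) * a ^ 2"
    by (simp only: power_add power_mult)
  with \<open>a ^ 3 = 1\<close> have "a ^ 2 = 1 ^ 2"
    using assms(2) by (simp add: mem_U_iff)
  then have "a = 1"
    using CHAR2_power2_eq_iff[OF CHAR_eq_2] by blast
  then show False
    using trace_1 trace_U_eq_0_iff[OF assms(2)] by simp
qed

lemma trace_inverse_U: "u \<in> U \<Longrightarrow> trace (inverse u) = trace u"
  using inverse_mem_U by (simp add: trace_U add.commute)

lemma U_ne_inverse: "u \<in> U \<Longrightarrow> u \<noteq> 1 \<Longrightarrow> u \<noteq> inverse u"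
  using trace_U_eq_0_iff by (force simp: trace_U CHAR2_add_self[OF CHAR_eq_2])

lemma power3_add_inverse_U: "u \<in> U \<Longrightarrow> u ^ 3 + inverse u ^ 3 = trace u ^ 3 + trace u"
  using CHAR2_power3_add_reciprocal[OF CHAR_eq_2, of u "inverse u"] U_nonzero
  by (simp add: trace_U power_inverse)

lemma power5_add_inverse_U:
  "u \<in> U \<Longrightarrow> u ^ 5 + inverse u ^ 5 = trace u ^ 5 + trace u ^ 3 + trace u"
  using CHAR2_power5_add_reciprocal[OF CHAR_eq_2, of u "inverse u"] U_nonzero
  by (simp add: trace_U power_inverse)

lemma inverse_pairs_disjoint:
  assumes "a \<in> U" "b \<in> U" "trace a \<noteq> trace b"
  shows "a \<noteq> b" "a \<noteq> inverse b" "inverse a \<noteq> b" "inverse a \<noteq> inverse b"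
  using assms(3) trace_inverse_U[OF assms(1)] trace_inverse_U[OF assms(2)] by auto

lemma divide_add_one_mem_F:
  assumes "z \<in> F - {0, 1}"
  shows "z / (z + 1) \<in> F - {0, 1}"
proof -
  have "z + 1 \<noteq> 0"
    using assms CHAR2_add_eq_0_iff[OF CHAR_eq_2] by auto
  moreover have "z / (z + 1) \<in> F"
    using assms by (simp add: divide_mem_F add_mem_F one_mem_F)
  ultimately show ?thesis
    using assms by (simp add: divide_eq_1_iff)
qed

lemma inj_on_divide_add_one: "inj_on (\<lambda>z. z / (z + 1)) (F - {0, 1})"
proof (rule inj_onI)
  fix x y
  assume xy: "x \<in> F - {0, 1}" "y \<in> F - {0, 1}" "x / (x + 1) = y / (y + 1)"
  then have "x + 1 \<noteq> 0" "y + 1 \<noteq> 0"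
    using CHAR2_add_eq_0_iff[OF CHAR_eq_2] by auto
  with xy(3) have "x * (y + 1) = y * (x + 1)"
    by (simp add: field_simps)
  then show "x = y"
    by (simp add: algebra_simps)
qed

definition syndrome :: "nat \<Rightarrow> ('a \<Rightarrow> 'a) \<Rightarrow> 'a" where
  "syndrome k w = (\<Sum>u\<in>U. w u * u ^ k)"

definition F_vectors :: "('a \<Rightarrow> 'a) set" where
  "F_vectors = {w \<in> vectors_on U. \<forall>u\<in>U. w u \<in> F}"

lemma syndrome_cong: "(\<And>u. u \<in> U \<Longrightarrow> x u = y u) \<Longrightarrow> syndrome k x = syndrome k y"
  by (simp add: syndrome_def)

lemma syndrome_diff: "syndrome k (x - y) = syndrome k x - syndrome k y"
  by (simp add: syndrome_def left_diff_distrib sum_subtractf)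

lemma syndrome_add: "syndrome k (\<lambda>u. x u + y u) = syndrome k x + syndrome k y"
  by (simp add: syndrome_def distrib_right sum.distrib)

lemma syndrome_scale: "syndrome k (\<lambda>u. c * x u) = c * syndrome k x"
  by (simp add: syndrome_def sum_distrib_left mult.assoc)

lemma syndrome_monomial: "syndrome k (\<lambda>u. c * u ^ j) = (if (q + 1) dvd (j + k) then c else 0)"
  by (simp add: syndrome_def mult.assoc sum_power_U flip: sum_distrib_left power_add)

lemma syndrome_power_q:
  assumes "\<forall>u\<in>U. w u \<in> F" "k \<le> q + 1"
  shows "syndrome k w ^ q = syndrome (q + 1 - k) w"
  unfolding syndrome_def frobenius_sum
  by (intro sum.cong refl) (use assms in \<open>simp add: power_mult_distrib mem_F_iff U_power_conj\<close>)

lemma syndrome_supported: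
  assumes "S \<subseteq> U" "\<And>u. u \<in> U - S \<Longrightarrow> w u = 0"
  shows "syndrome k w = (\<Sum>u\<in>S. w u * u ^ k)"
  unfolding syndrome_def by (rule sum.mono_neutral_right) (use assms in auto)

lemma syndrome_two_inverse_pairs:
  assumes "a \<in> U" "b \<in> U"
    and "a \<noteq> inverse a" "b \<noteq> inverse b" "a \<noteq> b" "a \<noteq> inverse b" "inverse a \<noteq> b"
      "inverse a \<noteq> inverse b"
  shows "syndrome k (\<lambda>u. if u = a \<or> u = inverse a then c else if u = b \<or> u = inverse b then d else 0)
    = c * (a ^ k + inverse a ^ k) + d * (b ^ k + inverse b ^ k)"
proof -
  have "{a, inverse a, b, inverse b} \<subseteq> U"
    using assms(1,2) inverse_mem_U by auto
  then have "syndrome k (\<lambda>u. if u = a \<or> u = inverse a then c else if u = b \<or> u = inverse b then d else 0)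
    = (\<Sum>u\<in>{a, inverse a, b, inverse b}.
        (if u = a \<or> u = inverse a then c else if u = b \<or> u = inverse b then d else 0) * u ^ k)"
    by (rule syndrome_supported) auto
  then show ?thesis
    using assms(3-8) by (simp add: algebra_simps power_inverse)
qed

lemma card_F_vectors: "card F_vectors = q ^ (q + 1)"
proof -
  have "bij_betw (\<lambda>f u. if u \<in> U then f u else 0) (PiE U (\<lambda>_. F)) F_vectors"
  proof (rule bij_betwI[where g = "\<lambda>w. restrict w U"])
    show "(\<lambda>f u. if u \<in> U then f u else 0) \<in> PiE U (\<lambda>_. F) \<rightarrow> F_vectors"
      by (auto simp: F_vectors_def vectors_on_def)
    show "(\<lambda>w. restrict w U) \<in> F_vectors \<rightarrow> PiE U (\<lambda>_. F)"
      by (auto simp: F_vectors_def)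
    show "restrict (\<lambda>u. if u \<in> U then f u else 0) U = f" if "f \<in> PiE U (\<lambda>_. F)" for f
      using that by (auto simp: PiE_iff extensional_def)
    show "(\<lambda>u. if u \<in> U then restrict w U u else 0) = w" if "w \<in> F_vectors" for w
      using that by (auto simp: F_vectors_def vectors_on_def)
  qed
  then have "card F_vectors = card (PiE U (\<lambda>_. F))"
    by (simp add: bij_betw_same_card)
  then show ?thesis
    by (simp add: card_PiE card_F card_U)
qed

lemma diff_mem_F_vectors: "x \<in> F_vectors \<Longrightarrow> y \<in> F_vectors \<Longrightarrow> x - y \<in> F_vectors"
  by (auto simp: F_vectors_def vectors_on_def minus_CHAR_2[OF CHAR_eq_2] add_mem_F)

lemma add_mem_F_vectors: "x \<in> F_vectors \<Longrightarrow> y \<in> F_vectors \<Longrightarrow> (\<lambda>u. x u + y u) \<in> F_vectors"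
  by (auto simp: F_vectors_def vectors_on_def add_mem_F)

lemma scale_mem_F_vectors: "c \<in> F \<Longrightarrow> x \<in> F_vectors \<Longrightarrow> (\<lambda>u. c * x u) \<in> F_vectors"
  by (auto simp: F_vectors_def vectors_on_def mult_mem_F)

lemma card_trace_image: "q \<le> 2 * card (trace ` (U - {1}))"
proof -
  let ?I = "trace ` (U - {1})"
  have fibre: "card {a \<in> U - {1}. trace a = z} \<le> 2" if "z \<in> ?I" for z
  proof -
    obtain a where a: "a \<in> U - {1}" "trace a = z"
      using \<open>z \<in> ?I\<close> by blast
    have "{b \<in> U - {1}. trace b = z} \<subseteq> {a, inverse a}"
    proof
      fix b
      assume "b \<in> {b \<in> U - {1}. trace b = z}"
      then show "b \<in> {a, inverse a}"
        using a trace_U_eq_iff[of a b] by auto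
    qed
    then have "card {b \<in> U - {1}. trace b = z} \<le> card {a, inverse a}"
      by (intro card_mono) auto
    also have "\<dots> \<le> 2"
      by (simp add: card_insert_if)
    finally show ?thesis .
  qed
  have "card (U - {1}) = card (\<Union>z\<in>?I. {a \<in> U - {1}. trace a = z})"
    by (rule arg_cong[where f = card]) auto
  also have "\<dots> \<le> (\<Sum>z\<in>?I. card {a \<in> U - {1}. trace a = z})"
    by (rule card_UN_le) simp
  also have "\<dots> \<le> (\<Sum>z\<in>?I. 2)"
    by (rule sum_mono) (rule fibre)
  finally show ?thesis
    using card_U one_mem_U by (simp add: mult.commute)
qed

end

section \<open>The subfield subcode\<close>

locale C35_code = gf_q_squared +
  assumes m_ge_4: "m \<ge> 4" and even_m: "even m"
begin

abbreviation C :: "('a \<Rightarrow> 'a) set" where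
  "C \<equiv> subfield_subcode U F (dual_code U (code_C35 q))"

lemma q_ge_16: "q \<ge> 16"
  using power_increasing[OF m_ge_4, of "2::nat"] q_def by simp

lemma inner_code_C35_eq_syndromes:
  "(\<Sum>u\<in>U. (if u \<in> U then a3 * u ^ 3 + aq2 * u ^ (q - 2) + a5 * u ^ 5 + aq4 * u ^ (q - 4) else 0)
      * w u)
   = a3 * syndrome 3 w + aq2 * syndrome (q - 2) w + a5 * syndrome 5 w + aq4 * syndrome (q - 4) w"
  by (simp add: syndrome_def sum.distrib sum_distrib_left algebra_simps)

lemma syndromes_conj_vanish:
  assumes "w \<in> F_vectors" "syndrome 3 w = 0" "syndrome 5 w = 0"
  shows "syndrome (q - 2) w = 0" "syndrome (q - 4) w = 0"
proof -
  have "\<forall>u\<in>U. w u \<in> F"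
    using assms(1) by (simp add: F_vectors_def)
  then show "syndrome (q - 2) w = 0" "syndrome (q - 4) w = 0"
    using syndrome_power_q[of w 3] syndrome_power_q[of w 5] assms(2,3) q_ge_16
    by (simp_all add: power_0_left numeral_eq_Suc)
qed

lemma mem_C_iff: "w \<in> C \<longleftrightarrow> w \<in> F_vectors \<and> syndrome 3 w = 0 \<and> syndrome 5 w = 0"
proof
  assume w: "w \<in> C"
  have orth: "(\<Sum>u\<in>U. c u * w u) = 0" if "c \<in> code_C35 q" for c
    using w that by (auto simp: subfield_subcode_def dual_code_def)
  have "(\<lambda>u. if u \<in> U then 1 * u ^ 3 + 0 * u ^ (q - 2) + 0 * u ^ 5 + 0 * u ^ (q - 4) else 0)
      \<in> code_C35 q"
    unfolding code_C35_def U_def by blast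
  from orth[OF this] have "syndrome 3 w = 0"
    by (simp only: inner_code_C35_eq_syndromes) simp
  moreover have "(\<lambda>u. if u \<in> U then 0 * u ^ 3 + 0 * u ^ (q - 2) + 1 * u ^ 5 + 0 * u ^ (q - 4) else 0)
      \<in> code_C35 q"
    unfolding code_C35_def U_def by blast
  from orth[OF this] have "syndrome 5 w = 0"
    by (simp only: inner_code_C35_eq_syndromes) simp
  moreover have "w \<in> F_vectors"
    using w by (auto simp: subfield_subcode_def dual_code_def F_vectors_def)
  ultimately show "w \<in> F_vectors \<and> syndrome 3 w = 0 \<and> syndrome 5 w = 0"
    by simp
next
  assume w: "w \<in> F_vectors \<and> syndrome 3 w = 0 \<and> syndrome 5 w = 0"
  then have "syndrome (q - 2) w = 0" "syndrome (q - 4) w = 0"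
    using syndromes_conj_vanish by simp_all
  have "(\<Sum>u\<in>U. c u * w u) = 0" if c: "c \<in> code_C35 q" for c
  proof -
    obtain a3 aq2 a5 aq4 where "c = (\<lambda>u. if u \<in> U
        then a3 * u ^ 3 + aq2 * u ^ (q - 2) + a5 * u ^ 5 + aq4 * u ^ (q - 4) else 0)"
      using c unfolding code_C35_def U_def by blast
    then show ?thesis
      using w \<open>syndrome (q - 2) w = 0\<close> \<open>syndrome (q - 4) w = 0\<close>
      by (simp only: inner_code_C35_eq_syndromes) simp
  qed
  then show "w \<in> C"
    using w by (simp add: subfield_subcode_def dual_code_def F_vectors_def)
qed

lemma syndromes_surj: "\<exists>w\<in>F_vectors. syndrome 3 w = \<alpha> \<and> syndrome 5 w = \<beta>"
proof -
  \<comment> \<open>By the orthogonality of the powers of u, only \<open>\<alpha> * u ^ (q - 2)\<close> contributes to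
    \<open>syndrome 3\<close> and only \<open>\<beta> * u ^ (q - 4)\<close> to \<open>syndrome 5\<close>.\<close>
  define w where "w u = (if u \<in> U then trace (\<alpha> * u ^ (q - 2)) + trace (\<beta> * u ^ (q - 4)) else 0)"
    for u
  have "w \<in> F_vectors"
    by (auto simp: w_def F_vectors_def vectors_on_def add_mem_F trace_mem_F)
  have syndrome_w: "syndrome k w = syndrome k (\<lambda>u. \<alpha> * u ^ (q - 2)) + syndrome k (\<lambda>u. \<alpha> ^ q * u ^ 3)
      + (syndrome k (\<lambda>u. \<beta> * u ^ (q - 4)) + syndrome k (\<lambda>u. \<beta> ^ q * u ^ 5))" for k
  proof -
    have "w u = (\<alpha> * u ^ (q - 2) + \<alpha> ^ q * u ^ 3) + (\<beta> * u ^ (q - 4) + \<beta> ^ q * u ^ 5)"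
      if "u \<in> U" for u
      using that q_ge_16 U_power_conj[OF that, of "q - 2"] U_power_conj[OF that, of "q - 4"]
      by (simp add: w_def trace_def power_mult_distrib)
    then show ?thesis
      by (simp only: syndrome_cong[of w] syndrome_add)
  qed
  have exponents: "q - 2 + 3 = q + 1" "q - 4 + 3 = q - 1" "q - 2 + 5 = (q + 1) + 2" "q - 4 + 5 = q + 1"
    using q_ge_16 by simp_all
  have not_dvd: "\<not> (q + 1) dvd 2" "\<not> (q + 1) dvd (3 + 3)" "\<not> (q + 1) dvd (q - 1)"
    "\<not> (q + 1) dvd (5 + 3)" "\<not> (q + 1) dvd (3 + 5)" "\<not> (q + 1) dvd (5 + 5)"
    using q_ge_16 by (simp_all add: nat_dvd_not_less)
  have "(q + 1) dvd ((q + 1) + 2) \<longleftrightarrow> (q + 1) dvd 2"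
    by (rule dvd_add_right_iff) simp
  then have "syndrome 3 w = \<alpha>" "syndrome 5 w = \<beta>"
    by (simp_all only: syndrome_w syndrome_monomial exponents not_dvd dvd_refl if_True if_False) simp_all
  with \<open>w \<in> F_vectors\<close> show ?thesis
    by blast
qed

lemma card_C: "card C = q ^ (q - 3)"
proof -
  let ?f = "\<lambda>w. (syndrome 3 w, syndrome 5 w)"
  have "C = {w \<in> F_vectors. ?f w = 0}"
    by (auto simp: mem_C_iff zero_prod_def)
  then have "card F_vectors = card (?f ` F_vectors) * card C"
    by (simp only:) (rule card_eq_card_image_mult_card_kernel,
        simp_all add: diff_mem_F_vectors syndrome_diff)
  moreover have "p \<in> ?f ` F_vectors" for p
  proof -
    obtain w where "w \<in> F_vectors" "syndrome 3 w = fst p" "syndrome 5 w = snd p"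
      using syndromes_surj by blast
    then show ?thesis
      by (intro image_eqI[of _ _ w]) simp_all
  qed
  then have "?f ` F_vectors = UNIV"
    by blast
  moreover have "card (UNIV :: ('a \<times> 'a) set) = q ^ 4"
    by (simp add: card_UNIV flip: UNIV_Times_UNIV card_cartesian_product del: UNIV_Times_UNIV)
  ultimately have "q ^ 4 * q ^ (q - 3) = q ^ 4 * card C"
    using card_F_vectors q_ge_16 by (simp flip: power_add)
  then show ?thesis
    using q_ge_16 by simp
qed

lemma zero_mem_C: "0 \<in> C"
  by (simp add: mem_C_iff F_vectors_def vectors_on_def zero_mem_F syndrome_def)

lemma diff_mem_C: "x \<in> C \<Longrightarrow> y \<in> C \<Longrightarrow> x - y \<in> C"
  by (simp add: mem_C_iff diff_mem_F_vectors syndrome_diff)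

lemma U_power_q_minus_4_mult:
  assumes "t \<in> U"
  shows "t ^ (q - 4) * t ^ 2 = t ^ (q - 2)" "t ^ (q - 4) * (t ^ 2) ^ 4 = t ^ 3"
    "t ^ (q - 4) * (t ^ 2) ^ 5 = t ^ 5"
proof -
  have "q - 4 + 2 = q - 2" "q - 4 + 2 * 4 = 3 + (q + 1)" "q - 4 + 2 * 5 = 5 + (q + 1)"
    using q_ge_16 by simp_all
  then show "t ^ (q - 4) * t ^ 2 = t ^ (q - 2)" "t ^ (q - 4) * (t ^ 2) ^ 4 = t ^ 3"
    "t ^ (q - 4) * (t ^ 2) ^ 5 = t ^ 5"
    using U_power_add_q1[OF assms] by (simp_all only: power_add[symmetric] power_mult[symmetric])
qed

lemma C_vanishing_off_three_points:
  assumes "w \<in> C" and in_U: "a \<in> U" "b \<in> U" "c \<in> U" and "a \<noteq> b" "b \<noteq> c" "a \<noteq> c"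
    and "\<And>u. u \<in> U - {a, b, c} \<Longrightarrow> w u = 0"
  shows "w a = 0 \<and> w b = 0 \<and> w c = 0"
proof -
  have w: "w \<in> F_vectors" "syndrome 3 w = 0" "syndrome 5 w = 0"
    using assms(1) mem_C_iff by simp_all
  have syndrome_abc: "syndrome k w = w a * a ^ k + w b * b ^ k + w c * c ^ k" for k
  proof -
    have "syndrome k w = (\<Sum>u\<in>{a, b, c}. w u * u ^ k)"
      by (rule syndrome_supported) (use assms in auto)
    then show ?thesis
      using assms(5-7) by (simp add: add.assoc)
  qed
  note shift = U_power_q_minus_4_mult[OF in_U(1)] U_power_q_minus_4_mult[OF in_U(2)]
    U_power_q_minus_4_mult[OF in_U(3)]
  \<comment> \<open>The exponents q - 4, q - 2, 3, 5 become the moments 0, 1, 4, 5 at the points \<open>t ^ 2\<close>.\<close>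
  let ?v = "\<lambda>t. w t * t ^ (q - 4)"
  have "?v a = 0 \<and> ?v b = 0 \<and> ?v c = 0"
  proof (rule CHAR2_three_points_moments_0_1_4_5[OF CHAR_eq_2])
    show "a ^ 2 \<noteq> b ^ 2" "b ^ 2 \<noteq> c ^ 2" "a ^ 2 \<noteq> c ^ 2"
      using assms(5-7) CHAR2_power2_eq_iff[OF CHAR_eq_2] by simp_all
    show "?v a + ?v b + ?v c = 0"
      using syndromes_conj_vanish(2)[OF w] syndrome_abc by simp
    show "?v a * a ^ 2 + ?v b * b ^ 2 + ?v c * c ^ 2 = 0"
      using syndromes_conj_vanish(1)[OF w] syndrome_abc shift by (simp add: mult.assoc)
    show "?v a * (a ^ 2) ^ 4 + ?v b * (b ^ 2) ^ 4 + ?v c * (c ^ 2) ^ 4 = 0"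
      using w(2) syndrome_abc shift by (simp add: mult.assoc)
    show "?v a * (a ^ 2) ^ 5 + ?v b * (b ^ 2) ^ 5 + ?v c * (c ^ 2) ^ 5 = 0"
      using w(3) syndrome_abc shift by (simp add: mult.assoc)
  qed
  then show ?thesis
    using in_U U_nonzero by auto
qed

lemma hamming_weight_C_ge_4:
  assumes "w \<in> C" "w \<noteq> 0"
  shows "4 \<le> hamming_weight U w"
proof (rule ccontr)
  assume "\<not> 4 \<le> hamming_weight U w"
  then have "card {u \<in> U. w u \<noteq> 0} \<le> 3"
    by (simp add: hamming_weight_def)
  moreover have "3 \<le> card U"
    using card_U q_ge_16 by simp
  ultimately obtain B where B: "{u \<in> U. w u \<noteq> 0} \<subseteq> B" "B \<subseteq> U" "card B = 3"
    using exists_subset_between[of "{u \<in> U. w u \<noteq> 0}" 3 U] by auto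
  then obtain a b c where abc: "B = {a, b, c}" "a \<noteq> b" "b \<noteq> c" "a \<noteq> c"
    by (auto simp: card_3_iff)
  then have "w a = 0 \<and> w b = 0 \<and> w c = 0"
    using B by (intro C_vanishing_off_three_points[OF assms(1)]) auto
  moreover have "w \<in> vectors_on U"
    using assms(1) by (simp add: mem_C_iff F_vectors_def)
  ultimately have "w u = 0" for u
    using B abc by (cases "u \<in> U") (auto simp: vectors_on_def)
  then show False
    using assms(2) by auto
qed

lemma trace_U_mem_F_minus_01: "a \<in> U - {1} \<Longrightarrow> trace a \<in> F - {0, 1}"
  using trace_mem_F trace_U_eq_0_iff[of a] trace_U_ne_1[OF even_m, of a] by auto

lemma trace_relation_exists:
  "\<exists>a\<in>U - {1}. \<exists>b\<in>U - {1}. trace b * trace a + trace b + trace a = 0"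
proof -
  \<comment> \<open>The relation says \<open>trace b = trace a / (trace a + 1)\<close>.\<close>
  let ?I = "trace ` (U - {1})" and ?S = "F - {0, 1}" and ?\<sigma> = "\<lambda>z::'a. z / (z + 1)"
  have I_S: "?I \<subseteq> ?S"
    by (rule image_subsetI) (rule trace_U_mem_F_minus_01)
  have "?\<sigma> ` ?I \<subseteq> ?S"
  proof (rule image_subsetI)
    fix z
    assume "z \<in> ?I"
    show "?\<sigma> z \<in> ?S"
      by (rule divide_add_one_mem_F[OF subsetD[OF I_S \<open>z \<in> ?I\<close>]])
  qed
  moreover have "card ?S < 2 * card ?I"
    using card_trace_image card_F zero_mem_F one_mem_F q_ge_16 by (simp add: card_Diff_subset)
  ultimately have "?I \<inter> ?\<sigma> ` ?I \<noteq> {}"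
    using pigeonhole_inter_image[OF finite I_S _ inj_on_subset[OF inj_on_divide_add_one I_S]]
    by blast
  then obtain a b where ab: "a \<in> U - {1}" "b \<in> U - {1}" "trace b = ?\<sigma> (trace a)"
    by auto
  moreover have "trace a + 1 \<noteq> 0"
    using ab(1) I_S CHAR2_add_eq_0_iff[OF CHAR_eq_2] by auto
  ultimately have "trace b * (trace a + 1) = trace a"
    by simp
  then have "trace b * trace a + trace b + trace a = 0"
    by (simp only: CHAR2_add_eq_0_iff[OF CHAR_eq_2]) (simp add: algebra_simps)
  with ab show ?thesis
    by blast
qed

lemma weight_4_codeword_exists: "\<exists>w\<in>C. hamming_weight U w = 4"
proof -
  obtain a b where a: "a \<in> U - {1}" and b: "b \<in> U - {1}"
    and relation: "trace b * trace a + trace b + trace a = 0"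
    using trace_relation_exists by blast
  define z y where "z = trace a" and "y = trace b"
  have z: "z \<in> F" "z \<noteq> 0" "z \<noteq> 1" and y: "y \<in> F" "y \<noteq> 0" "y \<noteq> 1"
    using trace_U_mem_F_minus_01[OF a] trace_U_mem_F_minus_01[OF b] by (auto simp: z_def y_def)
  have "z \<noteq> y"
    using relation z(2) by (auto simp: z_def y_def add.assoc CHAR2_add_self[OF CHAR_eq_2])
  then have distinct: "a \<noteq> inverse a" "b \<noteq> inverse b" "a \<noteq> b" "a \<noteq> inverse b"
    "inverse a \<noteq> b" "inverse a \<noteq> inverse b"
    using a b U_ne_inverse inverse_pairs_disjoint[of a b] by (auto simp: z_def y_def)
  have in_U: "a \<in> U" "inverse a \<in> U" "b \<in> U" "inverse b \<in> U"
    using a b inverse_mem_U by auto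
  define w where "w = (\<lambda>u. if u = a \<or> u = inverse a then y ^ 3 + y
    else if u = b \<or> u = inverse b then z ^ 3 + z else 0)"
  note syndrome_w = syndrome_two_inverse_pairs[OF in_U(1,3) distinct,
      where c = "y ^ 3 + y" and d = "z ^ 3 + z", folded w_def]
  have "syndrome 3 w = (y ^ 3 + y) * (z ^ 3 + z) + (z ^ 3 + z) * (y ^ 3 + y)"
    using in_U by (simp add: syndrome_w power3_add_inverse_U z_def y_def)
  then have "syndrome 3 w = 0"
    by (simp add: mult.commute CHAR2_add_self[OF CHAR_eq_2])
  have "syndrome 5 w = (y ^ 3 + y) * (z ^ 5 + z ^ 3 + z) + (z ^ 3 + z) * (y ^ 5 + y ^ 3 + y)"
    using in_U by (simp add: syndrome_w power5_add_inverse_U z_def y_def)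
  also have "\<dots> = y * z * ((y + z) * (y * z + y + z)) ^ 2"
    by (rule CHAR2_cubic_quintic_identity[OF CHAR_eq_2])
  also have "y * z + y + z = 0"
    using relation by (simp add: z_def y_def)
  finally have "syndrome 5 w = 0"
    by simp
  moreover have "w \<in> F_vectors"
    using in_U y(1) z(1)
    by (auto simp: w_def F_vectors_def vectors_on_def add_mem_F power_mem_F zero_mem_F)
  ultimately have "w \<in> C"
    using \<open>syndrome 3 w = 0\<close> by (simp add: mem_C_iff)
  have "y ^ 3 + y \<noteq> 0" "z ^ 3 + z \<noteq> 0"
    using y z CHAR2_add_eq_0_iff[OF CHAR_eq_2] by (simp_all add: CHAR2_power3_add_self[OF CHAR_eq_2])
  then have "{u \<in> U. w u \<noteq> 0} = {a, inverse a, b, inverse b}"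
    using in_U by (auto simp: w_def)
  then have "hamming_weight U w = 4"
    using distinct by (simp add: hamming_weight_def)
  with \<open>w \<in> C\<close> show ?thesis
    by blast
qed

lemma min_distance_C: "min_distance U C = 4"
proof -
  obtain w where "w \<in> C" "hamming_weight U w = 4"
    using weight_4_codeword_exists by blast
  then show ?thesis
    by (intro min_distance_eq_min_weight[OF _ zero_mem_C diff_mem_C hamming_weight_C_ge_4]) simp_all
qed

lemma linear_code_params_C: "linear_code_params U F C (q + 1) (q - 3) 4"
  unfolding linear_code_params_def
proof (intro conjI ballI)
  show "C \<subseteq> vectors_on U" "\<And>c i. c \<in> C \<Longrightarrow> i \<in> U \<Longrightarrow> c i \<in> F"
    by (auto simp: mem_C_iff F_vectors_def)
  show "(\<lambda>_. 0) \<in> C"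
    using zero_mem_C by (simp add: zero_fun_def)
  show "(\<lambda>i. x i + y i) \<in> C" if "x \<in> C" "y \<in> C" for x y
    using that by (simp add: mem_C_iff add_mem_F_vectors syndrome_add)
  show "(\<lambda>i. c * x i) \<in> C" if "c \<in> F" "x \<in> C" for c x
    using that by (simp add: mem_C_iff scale_mem_F_vectors syndrome_scale)
qed (simp_all add: card_U card_C card_F min_distance_C)

end

theorem theorem21:
  fixes m :: nat and q :: nat and U :: "'a::{field,finite} set"
  assumes U_def: "U = roots_unity q" and "m \<ge> 4" and "even m" and "q = 2 ^ m"
    and "card (UNIV :: 'a set) = q ^ 2"
  shows "linear_code_params U (subfield_q q)
           (subfield_subcode U (subfield_q q)
              (dual_code U (code_C35 q)))
           (q + 1) (q - 3) 4"
proof -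
  interpret C35_code m q U
    using assms by unfold_locales
  show ?thesis
    by (rule linear_code_params_C)
qed

end
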